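(* Let $\nu,\beta>0$, $\rho>1$, let $X_1,X_2,\ldots$ be i.i.d. $\mathrm{Pareto}(\nu,\beta)$ and $M_n\coloneqq\frac{\log X_{(n)}-\log X_{(1)}}{\log\rho}+1$, with $X_{(1)},X_{(n)}$ the minimum and maximum of $X_1,\ldots,X_n$. Then \[(M_n-1)(\beta\log\rho)-\log n\implies\mathrm{Gumbel}(0,1)\quad\text{as }n\to\infty,\] which implies that, for $n$ large, \[M_n\stackrel{\cdot}{\sim}\mathrm{Gumbel}\!\left(1+\frac{\log n}{\beta\log\rho},\frac{1}{\beta\log\rho}\right),\] so that $\mathbb{E}M_n\sim\frac{\log n}{\beta\log\rho}$, $\mathrm{Var}(M_n)\sim\frac{\pi^2}{6\beta^2\log^2\rho}$, and $\mathrm{Skew}(M_n)\sim\frac{12\sqrt6\,\zeta(3)}{\pi^3}$.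
   Context: $\mathrm{Pareto}(\nu,\beta)$ has CDF $1-(\nu/x)^\beta$ for $x>\nu$. $\mathrm{Gumbel}(\mu,\sigma)$ has CDF $\exp(-\exp(-(x-\mu)/\sigma))$. $\implies$ is convergence in distribution; $\stackrel{\cdot}{\sim}$ means approximate distribution; $\sim$ means ratio tends to $1$. $\zeta(3)=\sum_{k\ge1}k^{-3}$; $\mathrm{Skew}$ is the standardized third moment. *)

theory Defs
  imports "HOL-Probability.Probability" "HOL-Library.Landau_Symbols"
begin

definition pareto_cdf :: "real \<Rightarrow> real \<Rightarrow> real \<Rightarrow> real" where
  "pareto_cdf \<nu> \<beta> x = (if x > \<nu> then 1 - (\<nu> / x) powr \<beta> else 0)"

definition gumbel_cdf :: "real \<Rightarrow> real \<Rightarrow> real \<Rightarrow> real" where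
  "gumbel_cdf \<mu> \<sigma> x = exp (- exp (- (x - \<mu>) / \<sigma>))"

definition sample_max :: "(nat \<Rightarrow> 'a \<Rightarrow> real) \<Rightarrow> nat \<Rightarrow> 'a \<Rightarrow> real" where
  "sample_max X n \<omega> = Max ((\<lambda>i. X i \<omega>) ` {1..n})"

definition sample_min :: "(nat \<Rightarrow> 'a \<Rightarrow> real) \<Rightarrow> nat \<Rightarrow> 'a \<Rightarrow> real" where
  "sample_min X n \<omega> = Min ((\<lambda>i. X i \<omega>) ` {1..n})"

definition mean :: "'a measure \<Rightarrow> ('a \<Rightarrow> real) \<Rightarrow> real" where
  "mean M Y = (\<integral>\<omega>. Y \<omega> \<partial>M)"

definition var :: "'a measure \<Rightarrow> ('a \<Rightarrow> real) \<Rightarrow> real" where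
  "var M Y = (\<integral>\<omega>. (Y \<omega> - mean M Y)^2 \<partial>M)"

definition skew :: "'a measure \<Rightarrow> ('a \<Rightarrow> real) \<Rightarrow> real" where
  "skew M Y = (\<integral>\<omega>. (Y \<omega> - mean M Y)^3 \<partial>M) / (var M Y) powr (3/2)"

definition zeta3 :: real where
  "zeta3 = (\<Sum>k. 1 / (real (Suc k))^3)"

end

(*
  The variables beta * ln (X i / nu) are i.i.d. standard exponential, and
  (Mn n - 1) * beta * ln rho is their range R.  Almost surely the minimum of a sample of size n is
  attained at a unique index j, and P (R <= t) is n times the probability that X j is the minimum
  and all other samples lie within the factor exp (t / beta) of it; conditioning on X j, this is
  (1 - exp (-t)) ^ (n - 1).  So R is distributed like the maximum of n - 1 standard exponentials,
  and P (R - ln n <= x) = (1 - exp (-x) / n) ^ (n - 1) tends to exp (- exp (-x)).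
  Expanding (1 - exp (-t)) ^ m binomially expresses the moments of this distribution through the
  generalised harmonic numbers H_m^(k): mean, variance and third central moment are H_m, H_m^(2)
  and 2 H_m^(3), which behave like ln n, pi^2/6 and 2 zeta(3).
*)

theory Submission
  imports Defs
begin

section \<open>Central moments\<close>

lemma power2_powr_three_halves:
  fixes x :: real
  assumes "x > 0"
  shows "(x ^ 2) powr (3 / 2) = x ^ 3"
proof -
  have "(x ^ 2) powr (3 / 2) = (x powr 2) powr (3 / 2)"
    using assms by (simp add: powr_realpow)
  also have "\<dots> = x powr 3"
    by (simp add: powr_powr)
  finally show ?thesis
    using powr_realpow[OF assms, of 3] by simp
qed

lemma central_moments_from_raw_moments:
  fixes T :: "'a \<Rightarrow> real"
  assumes m1: "has_bochner_integral M T a1"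
    and m2: "has_bochner_integral M (\<lambda>\<omega>. T \<omega> ^ 2) a2"
    and m3: "has_bochner_integral M (\<lambda>\<omega>. T \<omega> ^ 3) a3"
    and total: "has_bochner_integral M (\<lambda>_. 1) (1 :: real)"
  shows "has_bochner_integral M (\<lambda>\<omega>. (T \<omega> - a1) ^ 2) (a2 - a1 ^ 2)"
    and "has_bochner_integral M (\<lambda>\<omega>. (T \<omega> - a1) ^ 3) (a3 - 3 * a1 * a2 + 2 * a1 ^ 3)"
proof -
  have "has_bochner_integral M (\<lambda>\<omega>. T \<omega> ^ 2 - 2 * a1 * T \<omega> + a1 ^ 2 * 1) (a2 - 2 * a1 * a1 + a1 ^ 2 * 1)"
    by (intro has_bochner_integral_add has_bochner_integral_diff has_bochner_integral_mult_right m1 m2 total)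
  moreover have "(\<lambda>\<omega>. T \<omega> ^ 2 - 2 * a1 * T \<omega> + a1 ^ 2 * 1) = (\<lambda>\<omega>. (T \<omega> - a1) ^ 2)"
    by (simp add: fun_eq_iff power2_eq_square algebra_simps)
  moreover have "a2 - 2 * a1 * a1 + a1 ^ 2 * 1 = a2 - a1 ^ 2"
    by (simp add: power2_eq_square)
  ultimately show "has_bochner_integral M (\<lambda>\<omega>. (T \<omega> - a1) ^ 2) (a2 - a1 ^ 2)"
    by (simp only:)
  have "has_bochner_integral M (\<lambda>\<omega>. T \<omega> ^ 3 - 3 * a1 * T \<omega> ^ 2 + 3 * a1 ^ 2 * T \<omega> - a1 ^ 3 * 1)
      (a3 - 3 * a1 * a2 + 3 * a1 ^ 2 * a1 - a1 ^ 3 * 1)"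
    by (intro has_bochner_integral_add has_bochner_integral_diff has_bochner_integral_mult_right m1 m2 m3 total)
  moreover have "(\<lambda>\<omega>. T \<omega> ^ 3 - 3 * a1 * T \<omega> ^ 2 + 3 * a1 ^ 2 * T \<omega> - a1 ^ 3 * 1) = (\<lambda>\<omega>. (T \<omega> - a1) ^ 3)"
    by (simp add: fun_eq_iff power2_eq_square power3_eq_cube algebra_simps)
  moreover have "a3 - 3 * a1 * a2 + 3 * a1 ^ 2 * a1 - a1 ^ 3 * 1 = a3 - 3 * a1 * a2 + 2 * a1 ^ 3"
    by (simp add: power2_eq_square power3_eq_cube)
  ultimately show "has_bochner_integral M (\<lambda>\<omega>. (T \<omega> - a1) ^ 3) (a3 - 3 * a1 * a2 + 2 * a1 ^ 3)"
    by (simp only:)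
qed

lemma mean_var_skew_affine:
  fixes c :: real
  assumes "prob_space M" and "integrable M T" and "c > 0"
  shows "mean M (\<lambda>\<omega>. a + T \<omega> / c) = a + mean M T / c"
    and "var M (\<lambda>\<omega>. a + T \<omega> / c) = var M T / c ^ 2"
    and "skew M (\<lambda>\<omega>. a + T \<omega> / c) = skew M T"
proof -
  interpret prob_space M by fact
  show mean: "mean M (\<lambda>\<omega>. a + T \<omega> / c) = a + mean M T / c"
    unfolding mean_def using assms(2) by (simp add: prob_space)
  have centred: "a + T \<omega> / c - mean M (\<lambda>\<omega>. a + T \<omega> / c) = (T \<omega> - mean M T) / c" for \<omega>
    unfolding mean using assms(3) by (simp add: field_simps)
  show var: "var M (\<lambda>\<omega>. a + T \<omega> / c) = var M T / c ^ 2"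
    unfolding var_def centred by (simp add: power_divide)
  have "(c ^ 2) powr (3 / 2) = c ^ 3"
    using assms(3) by (rule power2_powr_three_halves)
  then have "(var M T / c ^ 2) powr (3 / 2) = var M T powr (3 / 2) / c ^ 3"
    by (simp add: powr_divide)
  moreover have "(\<integral>\<omega>. ((T \<omega> - mean M T) / c) ^ 3 \<partial>M) = (\<integral>\<omega>. (T \<omega> - mean M T) ^ 3 \<partial>M) / c ^ 3"
    by (simp add: power_divide)
  ultimately show "skew M (\<lambda>\<omega>. a + T \<omega> / c) = skew M T"
    unfolding skew_def var centred using assms(3)
    by (cases "var M T powr (3 / 2) = 0") (simp_all add: field_simps)
qed

section \<open>Generalised harmonic numbers\<close>

definition gen_harm :: "nat \<Rightarrow> nat \<Rightarrow> real" where
  "gen_harm k m = (\<Sum>j<m. 1 / real (j + 1) ^ k)"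

text \<open>\<open>fact k * alt_binom_sum k m\<close> is the \<open>k\<close>-th moment of the maximum of \<open>m\<close> independent
  standard exponential variables.\<close>
definition alt_binom_sum :: "nat \<Rightarrow> nat \<Rightarrow> real" where
  "alt_binom_sum k m = (\<Sum>j<m. real (m choose (j + 1)) * (-1) ^ j / real (j + 1) ^ k)"

lemma gen_harm_Suc: "gen_harm k (Suc m) = gen_harm k m + 1 / real (Suc m) ^ k"
  unfolding gen_harm_def by simp

lemma gen_harm_1: "gen_harm 1 m = harm m"
  unfolding gen_harm_def harm_altdef by (simp add: inverse_eq_divide)

lemma alt_binom_sum_0:
  assumes "m > 0"
  shows "alt_binom_sum 0 m = 1"
proof -
  have "(\<Sum>i\<le>m. (-1) ^ i * real (m choose i)) = 0"
    using choose_alternating_sum[OF assms] by simp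
  also have "(\<Sum>i\<le>m. (-1) ^ i * real (m choose i))
      = 1 + (\<Sum>j<m. (-1) ^ (j + 1) * real (m choose (j + 1)))"
    by (simp add: sum.atMost_shift lessThan_Suc_atMost)
  finally show ?thesis
    unfolding alt_binom_sum_def by (simp add: sum_negf mult.commute)
qed

text \<open>Pascal's rule splits the sum, and \<open>(Suc m) * (m choose j) = (Suc m choose Suc j) * Suc j\<close>
  trades one power of \<open>j + 1\<close> in the denominator for the factor \<open>1 / Suc m\<close>.\<close>
lemma alt_binom_sum_Suc_Suc:
  "alt_binom_sum (Suc k) (Suc m) = alt_binom_sum (Suc k) m + alt_binom_sum k (Suc m) / real (Suc m)"
proof -
  have absorb: "real (m choose j) = real (Suc m choose (j + 1)) * real (j + 1) / real (Suc m)" for j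
  proof -
    have "real (Suc m * (m choose j)) = real ((Suc m choose Suc j) * Suc j)"
      using Suc_times_binomial_eq[of m j] by presburger
    then show ?thesis by (simp add: field_simps)
  qed
  have upper: "(\<Sum>j<Suc m. real (m choose (j + 1)) * (-1) ^ j / real (j + 1) ^ Suc k)
      = alt_binom_sum (Suc k) m"
    unfolding alt_binom_sum_def by simp
  have "(\<Sum>j<Suc m. real (m choose j) * (-1) ^ j / real (j + 1) ^ Suc k)
      = (\<Sum>j<Suc m. real (Suc m choose (j + 1)) * (-1) ^ j / real (j + 1) ^ k) / real (Suc m)"
    unfolding sum_divide_distrib
    by (intro sum.cong refl, subst absorb) (simp add: field_simps del: of_nat_Suc)
  then have lower: "(\<Sum>j<Suc m. real (m choose j) * (-1) ^ j / real (j + 1) ^ Suc k)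
      = alt_binom_sum k (Suc m) / real (Suc m)"
    unfolding alt_binom_sum_def by simp
  have "alt_binom_sum (Suc k) (Suc m)
      = (\<Sum>j<Suc m. (real (m choose (j + 1)) + real (m choose j)) * (-1) ^ j / real (j + 1) ^ Suc k)"
    unfolding alt_binom_sum_def by (intro sum.cong) auto
  also have "\<dots> = (\<Sum>j<Suc m. real (m choose (j + 1)) * (-1) ^ j / real (j + 1) ^ Suc k)
      + (\<Sum>j<Suc m. real (m choose j) * (-1) ^ j / real (j + 1) ^ Suc k)"
    by (simp add: sum.distrib[symmetric] add_divide_distrib distrib_right)
  finally show ?thesis using upper lower by simp
qed

lemma alt_binom_sum_1: "alt_binom_sum 1 m = gen_harm 1 m"
proof (induction m)
  case 0
  then show ?case by (simp add: alt_binom_sum_def gen_harm_def)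
next
  case (Suc m)
  then show ?case
    using alt_binom_sum_Suc_Suc[of 0 m] alt_binom_sum_0[of "Suc m"] gen_harm_Suc[of 1 m] by simp
qed

lemma alt_binom_sum_2: "2 * alt_binom_sum 2 m = gen_harm 1 m ^ 2 + gen_harm 2 m"
proof (induction m)
  case 0
  then show ?case by (simp add: alt_binom_sum_def gen_harm_def)
next
  case (Suc m)
  define h where "h = 1 / real (Suc m)"
  have "alt_binom_sum 2 (Suc m) = alt_binom_sum 2 m + gen_harm 1 (Suc m) * h"
    using alt_binom_sum_Suc_Suc[of 1 m] alt_binom_sum_1[of "Suc m"]
    by (simp add: numeral_2_eq_2 h_def)
  moreover have "gen_harm 1 (Suc m) = gen_harm 1 m + h" "gen_harm 2 (Suc m) = gen_harm 2 m + h ^ 2"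
    using gen_harm_Suc[of 1 m] gen_harm_Suc[of 2 m] by (simp_all add: h_def power_one_over)
  ultimately show ?case
    using Suc by (simp add: algebra_simps power2_eq_square)
qed

lemma alt_binom_sum_3:
  "6 * alt_binom_sum 3 m = gen_harm 1 m ^ 3 + 3 * gen_harm 1 m * gen_harm 2 m + 2 * gen_harm 3 m"
proof (induction m)
  case 0
  then show ?case by (simp add: alt_binom_sum_def gen_harm_def)
next
  case (Suc m)
  define h where "h = 1 / real (Suc m)"
  have "alt_binom_sum 3 (Suc m) = alt_binom_sum 3 m + alt_binom_sum 2 (Suc m) * h"
    using alt_binom_sum_Suc_Suc[of 2 m] by (simp add: numeral_3_eq_3 numeral_2_eq_2 h_def)
  moreover have "alt_binom_sum 2 (Suc m) = (gen_harm 1 (Suc m) ^ 2 + gen_harm 2 (Suc m)) / 2"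
    using alt_binom_sum_2[of "Suc m"] by simp
  moreover have "gen_harm 1 (Suc m) = gen_harm 1 m + h" "gen_harm 2 (Suc m) = gen_harm 2 m + h ^ 2"
    "gen_harm 3 (Suc m) = gen_harm 3 m + h ^ 3"
    using gen_harm_Suc[of 1 m] gen_harm_Suc[of 2 m] gen_harm_Suc[of 3 m]
    by (simp_all add: h_def power_one_over)
  ultimately show ?case
    using Suc by (simp add: algebra_simps power2_eq_square power3_eq_cube)
qed

lemma LIMSEQ_gen_harm_2: "gen_harm 2 \<longlonglongrightarrow> pi\<^sup>2 / 6"
  using inverse_squares_sums unfolding sums_def gen_harm_def by (simp add: add.commute)

lemma summable_inverse_cubes: "summable (\<lambda>k. 1 / real (Suc k) ^ 3)"
proof -
  have "summable (\<lambda>n. inverse (real n ^ 3))"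
    by (rule inverse_power_summable) simp
  then show ?thesis
    by (subst (asm) summable_Suc_iff[symmetric]) (simp add: inverse_eq_divide)
qed

lemma zeta3_pos: "zeta3 > 0"
  unfolding zeta3_def by (rule suminf_pos[OF summable_inverse_cubes]) simp

lemma LIMSEQ_gen_harm_3: "gen_harm 3 \<longlonglongrightarrow> zeta3"
  using summable_LIMSEQ[OF summable_inverse_cubes] unfolding zeta3_def gen_harm_def by simp

lemma asymp_equiv_harm_pred_ln: "(\<lambda>n. a + harm (n - 1)) \<sim>[at_top] (\<lambda>n. ln (real n))"
proof (rule asymp_equivI')
  have ln_inf: "filterlim (\<lambda>n. ln (real n)) at_infinity sequentially"
    by (rule filterlim_at_top_imp_at_infinity,
        rule filterlim_compose[OF ln_at_top filterlim_real_sequentially])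
  have "(\<lambda>n. (harm n - ln (real n)) / ln (real n) + 1 + (a - 1 / real n) / ln (real n))
      \<longlonglongrightarrow> 0 + 1 + 0"
    by (intro tendsto_add tendsto_const tendsto_divide_0[OF euler_mascheroni_LIMSEQ ln_inf]
        tendsto_divide_0[OF tendsto_diff[OF tendsto_const lim_const_over_n] ln_inf])
  moreover have "eventually (\<lambda>n. (harm n - ln (real n)) / ln (real n) + 1 + (a - 1 / real n) / ln (real n)
      = (a + harm (n - 1)) / ln (real n)) sequentially"
    unfolding eventually_sequentially
  proof (intro exI allI impI)
    fix n :: nat
    assume n: "n \<ge> 2"
    then have "harm n = harm (n - 1) + 1 / real n" "ln (real n) > 0"
      using harm_Suc[of "n - 1"] by (simp_all add: inverse_eq_divide)
    then show "(harm n - ln (real n)) / ln (real n) + 1 + (a - 1 / real n) / ln (real n)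
        = (a + harm (n - 1)) / ln (real n)"
      by (simp add: field_simps)
  qed
  ultimately show "((\<lambda>n. (a + harm (n - 1)) / ln (real n)) \<longlongrightarrow> 1) at_top"
    using tendsto_cong by fastforce
qed

lemma LIMSEQ_max_exp_skewness:
  "(\<lambda>m. 2 * gen_harm 3 m / gen_harm 2 m powr (3 / 2)) \<longlonglongrightarrow> 12 * sqrt 6 * zeta3 / pi ^ 3"
proof -
  have "(\<lambda>m. 2 * gen_harm 3 m / gen_harm 2 m powr (3 / 2)) \<longlonglongrightarrow> 2 * zeta3 / (pi\<^sup>2 / 6) powr (3 / 2)"
    by (intro tendsto_intros LIMSEQ_gen_harm_2 LIMSEQ_gen_harm_3) simp_all
  moreover have "(pi\<^sup>2 / 6) powr (3 / 2) = pi ^ 3 / (6 * sqrt 6)"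
  proof -
    define x where "x = pi / sqrt 6"
    have "x > 0" unfolding x_def by simp
    then have "(x ^ 2) powr (3 / 2) = x ^ 3"
      by (rule power2_powr_three_halves)
    moreover have "pi\<^sup>2 / 6 = x ^ 2"
      unfolding x_def by (simp add: power_divide)
    ultimately have "(pi\<^sup>2 / 6) powr (3 / 2) = x ^ 3"
      by simp
    also have "\<dots> = pi ^ 3 / (sqrt 6 ^ 2 * sqrt 6)"
      unfolding x_def by (simp add: power_divide power3_eq_cube power2_eq_square mult.assoc)
    finally show ?thesis by simp
  qed
  ultimately show ?thesis
    by (simp add: field_simps)
qed

section \<open>The maximum of independent standard exponential variables\<close>

definition max_exp_density :: "nat \<Rightarrow> real \<Rightarrow> real" where
  "max_exp_density m t = (if t < 0 then 0 else real m * exp (-t) * (1 - exp (-t)) ^ (m - 1))"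

definition max_exp_distr :: "nat \<Rightarrow> real measure" where
  "max_exp_distr m = density lborel (max_exp_density m)"

lemma max_exp_density_nonneg: "0 \<le> max_exp_density m t"
  unfolding max_exp_density_def by auto

lemma max_exp_density_measurable [measurable]: "max_exp_density m \<in> borel_measurable borel"
  unfolding max_exp_density_def[abs_def] by measurable

lemma binomial_term_eq_erlang_density:
  assumes "m > 0" and "t \<ge> 0"
  shows "real m * exp (-t) * (real ((m - 1) choose j) * (- exp (-t)) ^ j)
           = real (m choose (j + 1)) * (-1) ^ j * erlang_density 0 (real (j + 1)) t"
proof -
  have "m * ((m - 1) choose j) = (m choose (j + 1)) * (j + 1)"
    using Suc_times_binomial_eq[of "m - 1" j] assms by simp
  then have binom_absorb: "real m * real ((m - 1) choose j) = real (m choose (j + 1)) * real (j + 1)"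
    by (metis of_nat_mult)
  have exp_power: "exp (-t) * (- exp (-t)) ^ j = (-1) ^ j * exp (- (real (j + 1) * t))"
  proof -
    have "exp (- (real (j + 1) * t)) = exp (-t + real j * (-t))"
      by (simp add: algebra_simps)
    also have "\<dots> = exp (-t) * exp (-t) ^ j"
      by (simp only: exp_add exp_of_nat_mult)
    finally show ?thesis
      by (simp only: power_minus[of "exp (-t)"] mult.left_commute)
  qed
  have erlang: "erlang_density 0 (real (j + 1)) t = real (j + 1) * exp (- (real (j + 1) * t))"
    using \<open>t \<ge> 0\<close> by (simp add: erlang_density_def algebra_simps)
  have "real m * exp (-t) * (real ((m - 1) choose j) * (- exp (-t)) ^ j)
      = (real m * real ((m - 1) choose j)) * (exp (-t) * (- exp (-t)) ^ j)"
    by (simp only: mult_ac)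
  also have "\<dots> = real (m choose (j + 1)) * (-1) ^ j * (real (j + 1) * exp (- (real (j + 1) * t)))"
    unfolding binom_absorb exp_power by (simp only: mult_ac)
  finally show ?thesis
    unfolding erlang .
qed

text \<open>\<open>erlang_density 0 l\<close> is the exponential density with rate \<open>l\<close>.\<close>
lemma max_exp_density_eq_sum_erlang:
  assumes "m > 0"
  shows "max_exp_density m t = (\<Sum>j<m. real (m choose (j + 1)) * (-1) ^ j
           * erlang_density 0 (real (j + 1)) t)"
proof (cases "t < 0")
  case True
  then show ?thesis by (simp add: max_exp_density_def erlang_density_def)
next
  case False
  have "(1 - exp (-t)) ^ (m - 1) = (\<Sum>j\<le>m - 1. real ((m - 1) choose j) * (- exp (-t)) ^ j)"
    using binomial_ring[of "- exp (-t)" 1 "m - 1"]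
    by (simp only: power_one mult_1_right diff_conv_add_uminus add.commute)
  also have "\<dots> = (\<Sum>j<m. real ((m - 1) choose j) * (- exp (-t)) ^ j)"
    using assms by (intro sum.cong) auto
  finally have binom: "(1 - exp (-t)) ^ (m - 1) = (\<Sum>j<m. real ((m - 1) choose j) * (- exp (-t)) ^ j)" .
  show ?thesis
    using False binomial_term_eq_erlang_density[OF assms]
    unfolding max_exp_density_def binom sum_distrib_left by simp
qed

lemma has_bochner_integral_max_exp_density_power:
  assumes "m > 0"
  shows "has_bochner_integral lborel (\<lambda>t. max_exp_density m t * t ^ k) (fact k * alt_binom_sum k m)"
proof -
  have erlang_moment: "has_bochner_integral lborel (\<lambda>t. erlang_density 0 l t * t ^ k) (fact k / l ^ k)"
    if "l > 0" for l :: real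
  proof (rule has_bochner_integral_nn_integral)
    show "(\<integral>\<^sup>+ x. ennreal (erlang_density 0 l x * x ^ k) \<partial>lborel) = ennreal (fact k / l ^ k)"
      using nn_integral_erlang_ith_moment[OF that, of 0 k] by simp
  qed (use that in \<open>auto simp: erlang_density_def\<close>)
  have "has_bochner_integral lborel
      (\<lambda>t. \<Sum>j<m. (real (m choose (j + 1)) * (-1) ^ j) * (erlang_density 0 (real (j + 1)) t * t ^ k))
      (\<Sum>j<m. (real (m choose (j + 1)) * (-1) ^ j) * (fact k / real (j + 1) ^ k))"
    by (intro has_bochner_integral_sum has_bochner_integral_mult_right erlang_moment) simp
  moreover have "(\<lambda>t. \<Sum>j<m. (real (m choose (j + 1)) * (-1) ^ j) * (erlang_density 0 (real (j + 1)) t * t ^ k))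
      = (\<lambda>t. max_exp_density m t * t ^ k)"
    using assms by (simp add: max_exp_density_eq_sum_erlang sum_distrib_right mult.assoc)
  moreover have "(\<Sum>j<m. (real (m choose (j + 1)) * (-1) ^ j) * (fact k / real (j + 1) ^ k))
      = fact k * alt_binom_sum k m"
    unfolding alt_binom_sum_def sum_distrib_left by (intro sum.cong) simp_all
  ultimately show ?thesis by simp
qed

lemma real_distribution_max_exp_distr:
  assumes "m > 0"
  shows "real_distribution (max_exp_distr m)"
proof -
  have total: "has_bochner_integral lborel (max_exp_density m) 1"
    using has_bochner_integral_max_exp_density_power[OF assms, of 0] alt_binom_sum_0[OF assms] by simp
  then have "(\<integral>\<^sup>+ t. ennreal (max_exp_density m t) \<partial>lborel) = 1"
    by (subst nn_integral_eq_integral) (auto simp: has_bochner_integral_iff max_exp_density_nonneg)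
  then have "prob_space (max_exp_distr m)"
    unfolding max_exp_distr_def by (intro prob_spaceI) (simp add: emeasure_density)
  then show ?thesis
    unfolding real_distribution_def real_distribution_axioms_def by (simp add: max_exp_distr_def)
qed

lemma cdf_max_exp_distr:
  assumes "m > 0"
  shows "cdf (max_exp_distr m) x = (if x < 0 then 0 else (1 - exp (-x)) ^ m)"
proof -
  have emeasure: "emeasure (max_exp_distr m) {..x}
      = (\<integral>\<^sup>+ t. ennreal (max_exp_density m t) * indicator {..x} t \<partial>lborel)"
    unfolding max_exp_distr_def by (subst emeasure_density) (auto simp: mult.commute)
  show ?thesis
  proof (cases "x < 0")
    case True
    have "(\<integral>\<^sup>+ t. ennreal (max_exp_density m t) * indicator {..x} t \<partial>lborel)
        = (\<integral>\<^sup>+ t. 0 \<partial>(lborel :: real measure))"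
      by (intro nn_integral_cong) (use True in \<open>auto simp: max_exp_density_def indicator_def\<close>)
    then show ?thesis
      using True emeasure by (simp add: cdf_def measure_def)
  next
    case False
    let ?F = "\<lambda>t. (1 - exp (-t)) ^ m"
    have "((\<lambda>t. real m * exp (-t) * (1 - exp (-t)) ^ (m - 1)) has_integral (?F x - ?F 0)) {0..x}"
    proof (rule fundamental_theorem_of_calculus)
      fix t
      assume "t \<in> {0..x}"
      have "(?F has_real_derivative (real m * exp (-t) * (1 - exp (-t)) ^ (m - 1))) (at t within {0..x})"
        by (auto intro!: derivative_eq_intros simp: algebra_simps)
      then show "(?F has_vector_derivative real m * exp (-t) * (1 - exp (-t)) ^ (m - 1)) (at t within {0..x})"
        by (simp add: has_real_derivative_iff_has_vector_derivative[symmetric])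
    qed (use False in simp)
    then have primitive: "((\<lambda>t. real m * exp (-t) * (1 - exp (-t)) ^ (m - 1)) has_integral ?F x) {0..x}"
      using assms by (simp add: power_0_left)
    have "(max_exp_density m has_integral ?F x) {0..x}"
      by (rule iffD2[OF has_integral_cong primitive]) (simp add: max_exp_density_def)
    then have "(\<integral>\<^sup>+ t. ennreal (max_exp_density m t) * indicator {0..x} t \<partial>lborel) = ennreal (?F x)"
      by (intro nn_integral_has_integral_lebesgue') (auto simp: max_exp_density_nonneg)
    moreover have "(\<integral>\<^sup>+ t. ennreal (max_exp_density m t) * indicator {..x} t \<partial>lborel)
        = (\<integral>\<^sup>+ t. ennreal (max_exp_density m t) * indicator {0..x} t \<partial>lborel)"
      by (intro nn_integral_cong) (auto simp: max_exp_density_def split: split_indicator)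
    ultimately show ?thesis
      using False emeasure by (simp add: cdf_def measure_def)
  qed
qed

lemma has_bochner_integral_max_exp_distr_power:
  assumes "m > 0"
  shows "has_bochner_integral (max_exp_distr m) (\<lambda>t. t ^ k) (fact k * alt_binom_sum k m)"
  unfolding max_exp_distr_def
  using has_bochner_integral_max_exp_density_power[OF assms, of k]
  by (intro has_bochner_integral_density) (auto simp: max_exp_density_nonneg)

lemma mean_var_skew_max_exp:
  assumes "prob_space M" and [measurable]: "T \<in> borel_measurable M"
    and law: "distr M borel T = max_exp_distr m" and "m > 0"
  shows "integrable M T"
    and "mean M T = harm m"
    and "var M T = gen_harm 2 m"
    and "skew M T = 2 * gen_harm 3 m / gen_harm 2 m powr (3 / 2)"
proof -
  have raw: "has_bochner_integral M (\<lambda>\<omega>. T \<omega> ^ k) (fact k * alt_binom_sum k m)" for k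
  proof -
    have "has_bochner_integral (distr M borel T) (\<lambda>t. t ^ k) (fact k * alt_binom_sum k m)"
      using has_bochner_integral_max_exp_distr_power[OF \<open>m > 0\<close>] law by simp
    then show ?thesis
      by (simp add: has_bochner_integral_iff integrable_distr_eq integral_distr)
  qed
  have m0: "has_bochner_integral M (\<lambda>_. 1) (1 :: real)"
    using raw[of 0] alt_binom_sum_0[OF \<open>m > 0\<close>] by simp
  have m1: "has_bochner_integral M T (harm m)"
    using raw[of 1] unfolding alt_binom_sum_1 gen_harm_1 by simp
  have m2: "has_bochner_integral M (\<lambda>\<omega>. T \<omega> ^ 2) (harm m ^ 2 + gen_harm 2 m)"
    using raw[of 2] alt_binom_sum_2[of m] unfolding gen_harm_1 by simp
  have m3: "has_bochner_integral M (\<lambda>\<omega>. T \<omega> ^ 3) (harm m ^ 3 + 3 * harm m * gen_harm 2 m + 2 * gen_harm 3 m)"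
    using raw[of 3] alt_binom_sum_3[of m] unfolding gen_harm_1 by (simp add: fact_numeral)
  note central = central_moments_from_raw_moments[OF m1 m2 m3 m0]
  show "integrable M T"
    using m1 by (simp add: has_bochner_integral_iff)
  show mean: "mean M T = harm m"
    using m1 by (simp add: mean_def has_bochner_integral_iff)
  show var: "var M T = gen_harm 2 m"
    using central(1) unfolding var_def mean by (simp add: has_bochner_integral_iff)
  have "harm m ^ 3 + 3 * harm m * gen_harm 2 m + 2 * gen_harm 3 m
      - 3 * harm m * (harm m ^ 2 + gen_harm 2 m) + 2 * harm m ^ 3 = 2 * gen_harm 3 m"
    by (simp add: power2_eq_square power3_eq_cube algebra_simps)
  then show "skew M T = 2 * gen_harm 3 m / gen_harm 2 m powr (3 / 2)"
    using central(2) unfolding skew_def var mean by (simp add: has_bochner_integral_iff)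
qed

lemma LIMSEQ_cdf_max_exp_distr_gumbel:
  "(\<lambda>n. cdf (max_exp_distr (n - 1)) (x + ln (real n))) \<longlonglongrightarrow> gumbel_cdf 0 1 x"
proof -
  define e where "e = exp (-x)"
  obtain N :: nat where N: "real N > e"
    using reals_Archimedean2 by blast
  have "eventually (\<lambda>n. (1 + (- e) / real n) ^ n / (1 + (- e) / real n)
      = cdf (max_exp_distr (n - 1)) (x + ln (real n))) sequentially"
    unfolding eventually_sequentially
  proof (intro exI allI impI)
    fix n
    assume n: "n \<ge> max 2 N"
    then have "real n > e" "real n > 0"
      using N by auto
    moreover have "e > 0"
      unfolding e_def by simp
    ultimately have "ln e < ln (real n)"
      by simp
    then have "\<not> x + ln (real n) < 0"
      unfolding e_def by simp
    moreover have "exp (- (x + ln (real n))) = e / real n"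
      unfolding e_def using \<open>real n > 0\<close> by (simp add: exp_diff exp_minus field_simps)
    moreover have "q ^ n / q = q ^ (n - 1)" if "q \<noteq> 0" for q :: real
      using n that by (simp add: power_eq_if)
    moreover have "1 + (- e) / real n \<noteq> 0"
      using \<open>real n > e\<close> by (simp add: field_simps)
    ultimately show "(1 + (- e) / real n) ^ n / (1 + (- e) / real n)
        = cdf (max_exp_distr (n - 1)) (x + ln (real n))"
      using n by (simp add: cdf_max_exp_distr)
  qed
  moreover have "(\<lambda>n. (1 + (- e) / real n) ^ n / (1 + (- e) / real n)) \<longlonglongrightarrow> exp (- e) / (1 + 0)"
    by (intro tendsto_divide tendsto_exp_limit_sequentially tendsto_add tendsto_const lim_const_over_n)
       simp
  moreover have "exp (- e) / (1 + 0) = gumbel_cdf 0 1 x"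
    unfolding gumbel_cdf_def e_def by simp
  ultimately show ?thesis
    using tendsto_cong by fastforce
qed

section \<open>The Pareto distribution as an image of the uniform distribution\<close>

definition pareto_quantile :: "real \<Rightarrow> real \<Rightarrow> real \<Rightarrow> real" where
  "pareto_quantile \<nu> \<beta> u = \<nu> / u powr (1 / \<beta>)"

text \<open>Realising the Pareto law as the image of the uniform law on \<open>{0<..1}\<close> under its quantile
  function turns integrals against it into polynomial integrals over the unit interval.\<close>
definition pareto_distr :: "real \<Rightarrow> real \<Rightarrow> real measure" where
  "pareto_distr \<nu> \<beta> = distr (uniform_measure lborel {0<..1}) borel (pareto_quantile \<nu> \<beta>)"

lemma pareto_quantile_measurable [measurable]: "pareto_quantile \<nu> \<beta> \<in> borel_measurable borel"
  unfolding pareto_quantile_def[abs_def] by measurable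

lemma sets_pareto_distr [simp, measurable_cong]: "sets (pareto_distr \<nu> \<beta>) = sets borel"
  by (simp add: pareto_distr_def)

lemma real_distribution_pareto_distr: "real_distribution (pareto_distr \<nu> \<beta>)"
proof -
  have "prob_space (uniform_measure lborel {0<..1::real})"
    by (rule prob_space_uniform_measure) auto
  then show ?thesis
    unfolding real_distribution_def real_distribution_axioms_def pareto_distr_def
    by (auto intro!: prob_space.prob_space_distr)
qed

lemma pareto_quantile_le_iff:
  assumes "\<nu> > 0" "\<beta> > 0" "u > 0" "x > 0"
  shows "pareto_quantile \<nu> \<beta> u \<le> x \<longleftrightarrow> (\<nu> / x) powr \<beta> \<le> u"
proof -
  have "pareto_quantile \<nu> \<beta> u \<le> x \<longleftrightarrow> \<nu> / x \<le> u powr (1 / \<beta>)"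
    unfolding pareto_quantile_def using assms by (simp add: divide_le_eq pos_divide_le_eq mult.commute)
  also have "\<dots> \<longleftrightarrow> (\<nu> / x) powr \<beta> \<le> u"
  proof
    assume "\<nu> / x \<le> u powr (1 / \<beta>)"
    then have "(\<nu> / x) powr \<beta> \<le> (u powr (1 / \<beta>)) powr \<beta>"
      using assms by (intro powr_mono2) auto
    then show "(\<nu> / x) powr \<beta> \<le> u"
      using assms by (simp add: powr_powr)
  next
    assume "(\<nu> / x) powr \<beta> \<le> u"
    then have "((\<nu> / x) powr \<beta>) powr (1 / \<beta>) \<le> u powr (1 / \<beta>)"
      using assms by (intro powr_mono2) auto
    then show "\<nu> / x \<le> u powr (1 / \<beta>)"
      using assms by (simp add: powr_powr)
  qed
  finally show ?thesis .
qed

lemma pareto_quantile_ge: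
  assumes "\<nu> > 0" "\<beta> > 0" "0 < u" "u \<le> 1"
  shows "\<nu> \<le> pareto_quantile \<nu> \<beta> u"
proof -
  have "u powr (1 / \<beta>) \<le> 1"
    using powr_mono2[of "1 / \<beta>" u 1] assms by simp
  moreover have "u powr (1 / \<beta>) > 0"
    using assms by simp
  ultimately show ?thesis
    unfolding pareto_quantile_def using assms by (simp add: le_divide_eq)
qed

lemma pareto_tail_quantile:
  assumes "\<nu> > 0" "\<beta> > 0" "0 < u"
  shows "(\<nu> / pareto_quantile \<nu> \<beta> u) powr \<beta> = u"
  using assms by (simp add: pareto_quantile_def powr_powr)

lemma pareto_cdf_eq:
  assumes "\<nu> > 0" "\<nu> \<le> y"
  shows "pareto_cdf \<nu> \<beta> y = 1 - (\<nu> / y) powr \<beta>"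
  using assms by (auto simp: pareto_cdf_def)

lemma cdf_pareto_distr:
  assumes \<nu>: "\<nu> > 0" and \<beta>: "\<beta> > 0"
  shows "cdf (pareto_distr \<nu> \<beta>) = pareto_cdf \<nu> \<beta>"
proof
  fix x
  let ?U = "{0<..1} \<inter> {u. pareto_quantile \<nu> \<beta> u \<le> x}"
  have "cdf (pareto_distr \<nu> \<beta>) x = measure (uniform_measure lborel {0<..1}) (pareto_quantile \<nu> \<beta> -` {..x})"
    unfolding cdf_def pareto_distr_def by (subst measure_distr) auto
  also have "\<dots> = measure lborel ?U"
    by (subst measure_uniform_measure) (auto simp: vimage_def)
  also have "\<dots> = pareto_cdf \<nu> \<beta> x"
  proof (cases "x > \<nu>")
    case True
    have "x > 0" "(\<nu> / x) powr \<beta> > 0"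
      using True \<nu> by auto
    moreover have "(\<nu> / x) powr \<beta> \<le> 1"
      using powr_mono2[of \<beta> "\<nu> / x" 1] True \<nu> \<beta> by simp
    ultimately have "?U = {(\<nu> / x) powr \<beta> .. 1}"
      using pareto_quantile_le_iff[OF \<nu> \<beta>] by (auto simp: less_le_trans[of 0 "(\<nu> / x) powr \<beta>"])
    then show ?thesis
      using True \<open>(\<nu> / x) powr \<beta> \<le> 1\<close> by (simp add: pareto_cdf_def)
  next
    case False
    have "?U \<subseteq> {1}"
    proof
      fix u
      assume u: "u \<in> ?U"
      then have "pareto_quantile \<nu> \<beta> u \<le> \<nu>"
        using False by auto
      then have "(\<nu> / \<nu>) powr \<beta> \<le> u"
        using pareto_quantile_le_iff[OF \<nu> \<beta> _ \<nu>] u by auto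
      then show "u \<in> {1}"
        using u \<nu> by auto
    qed
    then have "emeasure lborel ?U = 0"
      using emeasure_mono[of ?U "{1::real}" lborel] by simp
    then show ?thesis
      using False by (simp add: pareto_cdf_def measure_def)
  qed
  finally show "cdf (pareto_distr \<nu> \<beta>) x = pareto_cdf \<nu> \<beta> x" .
qed

lemma measure_pareto_distr_greater:
  assumes "\<nu> > 0" "\<beta> > 0" "\<nu> \<le> y"
  shows "measure (pareto_distr \<nu> \<beta>) {x. y < x} = (\<nu> / y) powr \<beta>"
proof -
  interpret real_distribution "pareto_distr \<nu> \<beta>"
    by (rule real_distribution_pareto_distr)
  have "{x. y < x} = space (pareto_distr \<nu> \<beta>) - {..y}"
    by (auto simp: pareto_distr_def)
  then have "measure (pareto_distr \<nu> \<beta>) {x. y < x} = 1 - cdf (pareto_distr \<nu> \<beta>) y"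
    using prob_compl[of "{..y}"] by (simp add: cdf_def)
  then show ?thesis
    using assms by (simp add: cdf_pareto_distr pareto_cdf_eq)
qed

lemma measure_pareto_distr_ratio_interval:
  assumes \<nu>: "\<nu> > 0" and \<beta>: "\<beta> > 0" and y: "\<nu> \<le> y" and c: "1 \<le> c"
  shows "measure (pareto_distr \<nu> \<beta>) {x. y < x \<and> x \<le> c * y} = (\<nu> / y) powr \<beta> * (1 - c powr (-\<beta>))"
proof -
  interpret finite_borel_measure "pareto_distr \<nu> \<beta>"
    using real_distribution_pareto_distr by (rule real_distribution.finite_borel_measure_M)
  have "y > 0"
    using y \<nu> by simp
  have "measure (pareto_distr \<nu> \<beta>) {x. y < x \<and> x \<le> c * y}
      = cdf (pareto_distr \<nu> \<beta>) (c * y) - cdf (pareto_distr \<nu> \<beta>) y"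
  proof (cases "c = 1")
    case False
    then have "y < c * y"
      using c \<open>y > 0\<close> by simp
    moreover have "{x. y < x \<and> x \<le> c * y} = {y<..c * y}"
      by auto
    ultimately show ?thesis
      by (simp add: cdf_diff_eq)
  next
    case True
    then have empty: "{x. y < x \<and> x \<le> c * y} = {}"
      by auto
    show ?thesis
      by (subst empty) (simp add: True)
  qed
  also have "\<dots> = (\<nu> / y) powr \<beta> - (\<nu> / (c * y)) powr \<beta>"
  proof -
    have "y \<le> c * y"
      using mult_right_mono[OF c, of y] \<open>y > 0\<close> by simp
    then show ?thesis
      using pareto_cdf_eq[OF \<nu> y] pareto_cdf_eq[OF \<nu>, of "c * y"] y
      by (simp add: cdf_pareto_distr \<nu> \<beta>)
  qed
  also have "(\<nu> / (c * y)) powr \<beta> = (\<nu> / y) powr \<beta> * c powr (-\<beta>)"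
    using \<nu> \<open>y > 0\<close> c by (simp add: powr_divide powr_mult powr_minus_divide)
  finally show ?thesis
    by (simp add: algebra_simps)
qed

lemma nn_integral_pareto_distr_power:
  assumes \<nu>: "\<nu> > 0" and \<beta>: "\<beta> > 0" and "a \<ge> 0"
    and [measurable]: "h \<in> borel_measurable borel"
    and h: "\<And>u. 0 < u \<Longrightarrow> u \<le> 1 \<Longrightarrow> h (pareto_quantile \<nu> \<beta> u) = (u * a) ^ m"
  shows "(\<integral>\<^sup>+ y. ennreal (h y) \<partial>pareto_distr \<nu> \<beta>) = ennreal (a ^ m / real (Suc m))"
proof -
  have "(\<integral>\<^sup>+ y. ennreal (h y) \<partial>pareto_distr \<nu> \<beta>)
      = (\<integral>\<^sup>+ u. ennreal (h (pareto_quantile \<nu> \<beta> u)) * indicator {0<..1} u \<partial>lborel)"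
    unfolding pareto_distr_def
    by (simp add: nn_integral_distr nn_integral_uniform_measure divide_ennreal_def)
  also have "\<dots> = (\<integral>\<^sup>+ u. ennreal (a ^ m * u ^ m) * indicator {0..1} u \<partial>lborel)"
    using AE_lborel_singleton[of 0]
    by (intro nn_integral_cong_AE, eventually_elim)
       (auto simp: h power_mult_distrib mult.commute split: split_indicator)
  also have "\<dots> = ennreal (a ^ m / real (Suc m))"
  proof (rule nn_integral_has_integral_lebesgue')
    let ?G = "\<lambda>u. a ^ m / real (Suc m) * u ^ Suc m"
    have "((\<lambda>u. a ^ m * u ^ m) has_integral (?G 1 - ?G 0)) {0..1}"
    proof (rule fundamental_theorem_of_calculus)
      fix u :: real
      have "((\<lambda>u. u ^ Suc m) has_real_derivative real (Suc m) * u ^ m) (at u within {0..1})"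
        using DERIV_pow[of "Suc m" u "{0..1}"] by simp
      then have "(?G has_real_derivative a ^ m / real (Suc m) * (real (Suc m) * u ^ m)) (at u within {0..1})"
        by (rule DERIV_cmult)
      then show "(?G has_vector_derivative a ^ m * u ^ m) (at u within {0..1})"
        by (simp add: has_real_derivative_iff_has_vector_derivative del: of_nat_Suc)
    qed simp
    then show "((\<lambda>u. a ^ m * u ^ m) has_integral (a ^ m / real (Suc m))) {0..1}"
      by simp
  qed (use \<open>a \<ge> 0\<close> in auto)
  finally show ?thesis .
qed

section \<open>Independent samples\<close>

lemma measurable_measure_section:
  fixes P :: "real measure"
  assumes "prob_space P" and sets_P: "sets P = sets borel"
    and Q: "{p :: real \<times> real. Q (fst p) (snd p)} \<in> sets (borel \<Otimes>\<^sub>M borel)"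
  shows "(\<lambda>y. measure P {x. Q y x}) \<in> borel_measurable borel"
proof -
  interpret prob_space P by fact
  have "(\<lambda>y. emeasure P (Pair y -` {p. Q (fst p) (snd p)})) \<in> borel_measurable (borel :: real measure)"
    using measurable_emeasure_Pair[of "{p. Q (fst p) (snd p)}" borel] Q
    by (simp add: sets_pair_measure_cong[OF refl sets_P])
  then have "(\<lambda>y. enn2real (emeasure P (Pair y -` {p. Q (fst p) (snd p)}))) \<in> borel_measurable borel"
    by measurable
  then show ?thesis
    by (simp add: measure_def vimage_def)
qed

lemma (in prob_space) emeasure_indep_var_pair:
  assumes "indep_var N A N' B" and [measurable]: "A \<in> measurable M N" "B \<in> measurable M N'"
    and "S \<in> sets (N \<Otimes>\<^sub>M N')"
  shows "emeasure M ((\<lambda>\<omega>. (A \<omega>, B \<omega>)) -` S \<inter> space M)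
           = (\<integral>\<^sup>+ a. emeasure (distr M N' B) (Pair a -` S) \<partial>distr M N A)"
proof -
  interpret B: prob_space "distr M N' B"
    by (rule prob_space_distr) simp
  have "emeasure M ((\<lambda>\<omega>. (A \<omega>, B \<omega>)) -` S \<inter> space M) = emeasure (distr M N A \<Otimes>\<^sub>M distr M N' B) S"
    using assms by (simp add: emeasure_distr indep_var_distribution_eq)
  also have "\<dots> = (\<integral>\<^sup>+ a. emeasure (distr M N' B) (Pair a -` S) \<partial>distr M N A)"
    using assms(4) by (intro B.emeasure_pair_measure_alt) auto
  finally show ?thesis .
qed

lemma (in prob_space) prob_iid_forall_in:
  fixes X :: "nat \<Rightarrow> 'a \<Rightarrow> real" and P :: "real measure"
  assumes ind: "indep_vars (\<lambda>_. borel) X UNIV"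
    and [measurable]: "\<And>i. X i \<in> borel_measurable M"
    and law: "\<And>i. distr M borel (X i) = P"
    and "finite I" "I \<noteq> {}" and [measurable]: "A \<in> sets borel"
  shows "prob {\<omega> \<in> space M. \<forall>i\<in>I. X i \<omega> \<in> A} = measure P A ^ card I"
proof -
  have "{\<omega> \<in> space M. \<forall>i\<in>I. X i \<omega> \<in> A} = (\<Inter>i\<in>I. X i -` A \<inter> space M)"
    using \<open>I \<noteq> {}\<close> by auto
  moreover have "prob (\<Inter>i\<in>I. X i -` A \<inter> space M) = (\<Prod>i\<in>I. prob (X i -` A \<inter> space M))"
    using assms by (intro indep_varsD[OF ind]) auto
  moreover have "prob (X i -` A \<inter> space M) = measure P A" for i
    by (simp add: law[of i, symmetric] measure_distr)
  ultimately show ?thesis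
    by simp
qed

text \<open>For i.i.d.\ variables with law \<open>P\<close>, conditioning on \<open>X j = y\<close> makes the events
  \<open>Q y (X i)\<close>, \<open>i \<in> I\<close>, independent with common probability \<open>P {x. Q y x}\<close>.\<close>
lemma (in prob_space) emeasure_iid_forall_related:
  fixes X :: "nat \<Rightarrow> 'a \<Rightarrow> real" and P :: "real measure"
  assumes ind: "indep_vars (\<lambda>_. borel) X UNIV"
    and [measurable]: "\<And>i. X i \<in> borel_measurable M"
    and law: "\<And>i. distr M borel (X i) = P"
    and I: "finite I" "I \<noteq> {}" "j \<notin> I"
    and Q: "{p :: real \<times> real. Q (fst p) (snd p)} \<in> sets (borel \<Otimes>\<^sub>M borel)"
  shows "emeasure M {\<omega> \<in> space M. \<forall>i\<in>I. Q (X j \<omega>) (X i \<omega>)}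
           = (\<integral>\<^sup>+ y. ennreal (measure P {x. Q y x} ^ card I) \<partial>P)"
proof -
  let ?PI = "PiM I (\<lambda>_. borel :: real measure)" and ?PJ = "PiM {j} (\<lambda>_. borel :: real measure)"
  define V where "V = (\<lambda>\<omega>. \<lambda>i\<in>I. X i \<omega>)"
  define W where "W = (\<lambda>\<omega>. \<lambda>i\<in>{j}. X i \<omega>)"
  have [measurable]: "V \<in> measurable M ?PI" "W \<in> measurable M ?PJ"
    unfolding V_def W_def by (intro measurable_restrict; simp)+
  have indep: "indep_var ?PJ W ?PI V"
    unfolding V_def W_def using I by (intro indep_var_restrict[OF ind]) auto
  have [measurable]: "(\<lambda>y. measure P {x. Q y x}) \<in> borel_measurable borel"
    using measurable_measure_section[OF _ _ Q] prob_space_distr[of "X j" borel] law[of j] by auto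
  define S where "S = {p \<in> space (?PJ \<Otimes>\<^sub>M ?PI). \<forall>i\<in>I. Q (fst p j) (snd p i)}"
  have S: "S \<in> sets (?PJ \<Otimes>\<^sub>M ?PI)"
    unfolding S_def
  proof (rule sets.sets_Collect_finite_All'[OF _ I(1,2)])
    fix i
    assume "i \<in> I"
    then have "(\<lambda>p. (fst p j, snd p i)) \<in> measurable (?PJ \<Otimes>\<^sub>M ?PI) (borel \<Otimes>\<^sub>M borel)"
      by measurable
    from measurable_sets[OF this Q]
    show "{p \<in> space (?PJ \<Otimes>\<^sub>M ?PI). Q (fst p j) (snd p i)} \<in> sets (?PJ \<Otimes>\<^sub>M ?PI)"
      by (simp add: vimage_def Int_def conj_commute)
  qed
  have slice: "emeasure (distr M ?PI V) (Pair w -` S) = ennreal (measure P {x. Q (w j) x} ^ card I)"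
    if "w \<in> space ?PJ" for w
  proof -
    have "{x. Q (w j) x} \<in> sets borel"
      using sets_Pair1[OF Q, of "w j"] by (simp add: vimage_def)
    moreover have "V -` (Pair w -` S) \<inter> space M = {\<omega> \<in> space M. \<forall>i\<in>I. X i \<omega> \<in> {x. Q (w j) x}}"
      using measurable_space[OF \<open>V \<in> measurable M ?PI\<close>] that by (auto simp: S_def V_def space_pair_measure)
    moreover have "Pair w -` S \<in> sets ?PI"
      using S by (rule sets_Pair1)
    ultimately show ?thesis
      using prob_iid_forall_in[OF ind _ law I(1,2), of "{x. Q (w j) x}"]
      by (simp add: emeasure_distr emeasure_eq_measure)
  qed
  have "{\<omega> \<in> space M. \<forall>i\<in>I. Q (X j \<omega>) (X i \<omega>)} = (\<lambda>\<omega>. (W \<omega>, V \<omega>)) -` S \<inter> space M"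
    by (auto simp: S_def V_def W_def space_pair_measure space_PiM)
  then have "emeasure M {\<omega> \<in> space M. \<forall>i\<in>I. Q (X j \<omega>) (X i \<omega>)}
      = (\<integral>\<^sup>+ w. emeasure (distr M ?PI V) (Pair w -` S) \<partial>distr M ?PJ W)"
    using emeasure_indep_var_pair[OF indep _ _ S] by simp
  also have "\<dots> = (\<integral>\<^sup>+ w. ennreal (measure P {x. Q (w j) x} ^ card I) \<partial>distr M ?PJ W)"
    by (intro nn_integral_cong) (simp add: slice)
  also have "\<dots> = (\<integral>\<^sup>+ y. ennreal (measure P {x. Q y x} ^ card I) \<partial>distr M borel (X j))"
    by (simp add: nn_integral_distr W_def)
  finally show ?thesis
    by (simp add: law)
qed

lemma disjoint_family_on_strict_min:
  assumes "\<And>x y. Q x y \<Longrightarrow> x < (y :: real)"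
  shows "disjoint_family_on (\<lambda>j. {\<omega> \<in> S. \<forall>i\<in>I - {j}. Q (X j \<omega>) (X i \<omega>)}) I"
  unfolding disjoint_family_on_def
proof (intro ballI impI)
  fix j k
  assume "j \<in> I" "k \<in> I" "j \<noteq> k"
  then have "\<omega> \<in> {\<omega> \<in> S. \<forall>i\<in>I - {j}. Q (X j \<omega>) (X i \<omega>)} \<Longrightarrow>
      \<omega> \<in> {\<omega> \<in> S. \<forall>i\<in>I - {k}. Q (X k \<omega>) (X i \<omega>)} \<Longrightarrow> False" for \<omega>
    using assms[of "X j \<omega>" "X k \<omega>"] assms[of "X k \<omega>" "X j \<omega>"] by auto
  then show "{\<omega> \<in> S. \<forall>i\<in>I - {j}. Q (X j \<omega>) (X i \<omega>)} \<inter> {\<omega> \<in> S. \<forall>i\<in>I - {k}. Q (X k \<omega>) (X i \<omega>)} = {}"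
    by blast
qed

section \<open>The range of a Pareto sample\<close>

locale iid_pareto = prob_space M
  for M :: "'a measure" and X :: "nat \<Rightarrow> 'a \<Rightarrow> real" and \<nu> \<beta> :: real +
  assumes \<nu>_pos: "\<nu> > 0" and \<beta>_pos: "\<beta> > 0"
    and X_measurable [measurable]: "\<And>i. X i \<in> borel_measurable M"
    and X_indep: "indep_vars (\<lambda>_. borel) X UNIV"
    and cdf_X: "\<And>i. cdf (distr M borel (X i)) = pareto_cdf \<nu> \<beta>"
begin

lemma distr_X: "distr M borel (X i) = pareto_distr \<nu> \<beta>"
  by (rule cdf_unique)
     (auto simp: real_distribution_pareto_distr cdf_X cdf_pareto_distr \<nu>_pos \<beta>_pos)

lemma AE_X_gt: "AE \<omega> in M. \<forall>i\<in>{1..n}. \<nu> < X i \<omega>"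
proof (rule AE_finite_allI)
  fix i
  interpret P: real_distribution "pareto_distr \<nu> \<beta>"
    by (rule real_distribution_pareto_distr)
  have "measure (pareto_distr \<nu> \<beta>) {..\<nu>} = 0"
    using cdf_pareto_distr[OF \<nu>_pos \<beta>_pos] by (simp add: cdf_def fun_eq_iff pareto_cdf_def)
  then have "{..\<nu>} \<in> null_sets (pareto_distr \<nu> \<beta>)"
    by (simp add: P.emeasure_eq_measure null_setsI)
  then have "AE y in distr M borel (X i). \<nu> < y"
    unfolding distr_X by (rule AE_I') auto
  then show "AE \<omega> in M. \<nu> < X i \<omega>"
    by (subst (asm) AE_distr_iff) auto
qed simp

lemma events_forall_related:
  assumes "{p :: real \<times> real. Q (fst p) (snd p)} \<in> sets (borel \<Otimes>\<^sub>M borel)" and "finite I"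
  shows "{\<omega> \<in> space M. \<forall>i\<in>I. Q (X j \<omega>) (X i \<omega>)} \<in> events"
proof (rule sets.sets_Collect_finite_All[OF _ \<open>finite I\<close>])
  fix i
  have "(\<lambda>\<omega>. (X j \<omega>, X i \<omega>)) \<in> measurable M (borel \<Otimes>\<^sub>M borel)"
    by measurable
  from measurable_sets[OF this assms(1)]
  show "{\<omega> \<in> space M. Q (X j \<omega>) (X i \<omega>)} \<in> events"
    by (simp add: vimage_def Int_def conj_commute)
qed

text \<open>Through the Pareto quantile function the probability reduces to
  \<open>\<integral>\<^sub>0\<^sup>1 (u * a) ^ (n - 1) du\<close>.\<close>
lemma emeasure_others_related:
  assumes n: "n \<ge> 2" and j: "j \<in> {1..n}"
    and Q: "{p :: real \<times> real. Q (fst p) (snd p)} \<in> sets (borel \<Otimes>\<^sub>M borel)" and "a \<ge> 0"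
    and quantile: "\<And>u. 0 < u \<Longrightarrow> u \<le> 1 \<Longrightarrow>
                       measure (pareto_distr \<nu> \<beta>) {x. Q (pareto_quantile \<nu> \<beta> u) x} = u * a"
  shows "emeasure M {\<omega> \<in> space M. \<forall>i\<in>{1..n} - {j}. Q (X j \<omega>) (X i \<omega>)} = ennreal (a ^ (n - 1) / real n)"
proof -
  have "(if j = 1 then 2 else 1) \<in> {1..n} - {j}"
    using n j by auto
  then have "{1..n} - {j} \<noteq> {}"
    by blast
  moreover have "card ({1..n} - {j}) = n - 1"
    using j by simp
  ultimately have "emeasure M {\<omega> \<in> space M. \<forall>i\<in>{1..n} - {j}. Q (X j \<omega>) (X i \<omega>)}
      = (\<integral>\<^sup>+ y. ennreal (measure (pareto_distr \<nu> \<beta>) {x. Q y x} ^ (n - 1)) \<partial>pareto_distr \<nu> \<beta>)"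
    using emeasure_iid_forall_related[OF X_indep X_measurable distr_X _ _ _ Q] by simp
  also have "\<dots> = ennreal (a ^ (n - 1) / real (Suc (n - 1)))"
  proof (rule nn_integral_pareto_distr_power[OF \<nu>_pos \<beta>_pos \<open>a \<ge> 0\<close>])
    have "prob_space (pareto_distr \<nu> \<beta>)"
      using real_distribution_pareto_distr by (simp add: real_distribution_def)
    from measurable_measure_section[OF this _ Q]
    show "(\<lambda>y. measure (pareto_distr \<nu> \<beta>) {x. Q y x} ^ (n - 1)) \<in> borel_measurable borel"
      by measurable
  qed (simp add: quantile)
  finally show ?thesis
    using n by simp
qed

lemma prob_exists_others_related:
  assumes n: "n \<ge> 2" and Q_less: "\<And>x y. Q x y \<Longrightarrow> x < y"
    and Q: "{p :: real \<times> real. Q (fst p) (snd p)} \<in> sets (borel \<Otimes>\<^sub>M borel)" and "a \<ge> 0"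
    and quantile: "\<And>u. 0 < u \<Longrightarrow> u \<le> 1 \<Longrightarrow>
                       measure (pareto_distr \<nu> \<beta>) {x. Q (pareto_quantile \<nu> \<beta> u) x} = u * a"
  shows "prob (\<Union>j\<in>{1..n}. {\<omega> \<in> space M. \<forall>i\<in>{1..n} - {j}. Q (X j \<omega>) (X i \<omega>)}) = a ^ (n - 1)"
proof -
  have "{\<omega> \<in> space M. \<forall>i\<in>{1..n} - {j}. Q (X j \<omega>) (X i \<omega>)} \<in> events" for j
    by (rule events_forall_related[OF Q]) simp
  then have "prob (\<Union>j\<in>{1..n}. {\<omega> \<in> space M. \<forall>i\<in>{1..n} - {j}. Q (X j \<omega>) (X i \<omega>)})
      = (\<Sum>j\<in>{1..n}. prob {\<omega> \<in> space M. \<forall>i\<in>{1..n} - {j}. Q (X j \<omega>) (X i \<omega>)})"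
    by (intro finite_measure_finite_Union disjoint_family_on_strict_min Q_less) auto
  also have "\<dots> = (\<Sum>j\<in>{1..n}. a ^ (n - 1) / real n)"
  proof (rule sum.cong)
    fix j
    assume "j \<in> {1..n}"
    from emeasure_others_related[OF n this Q \<open>a \<ge> 0\<close> quantile]
    show "prob {\<omega> \<in> space M. \<forall>i\<in>{1..n} - {j}. Q (X j \<omega>) (X i \<omega>)} = a ^ (n - 1) / real n"
      using \<open>a \<ge> 0\<close> by (simp add: emeasure_eq_measure)
  qed simp
  finally show ?thesis
    using n by simp
qed

lemma AE_unique_min:
  assumes "n \<ge> 2"
  shows "AE \<omega> in M. \<exists>j\<in>{1..n}. \<forall>i\<in>{1..n} - {j}. X j \<omega> < X i \<omega>"
proof -
  have "prob (\<Union>j\<in>{1..n}. {\<omega> \<in> space M. \<forall>i\<in>{1..n} - {j}. X j \<omega> < X i \<omega>}) = 1 ^ (n - 1)"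
  proof (rule prob_exists_others_related[OF assms])
    have "{p \<in> space (borel \<Otimes>\<^sub>M borel). fst p < snd p} \<in> sets (borel \<Otimes>\<^sub>M (borel :: real measure))"
      by measurable
    then show "{p :: real \<times> real. fst p < snd p} \<in> sets (borel \<Otimes>\<^sub>M borel)"
      by (simp add: space_pair_measure)
    fix u :: real
    assume "0 < u" "u \<le> 1"
    then show "measure (pareto_distr \<nu> \<beta>) {x. pareto_quantile \<nu> \<beta> u < x} = u * 1"
      by (simp add: measure_pareto_distr_greater pareto_quantile_ge pareto_tail_quantile \<nu>_pos \<beta>_pos)
  qed simp_all
  then have "AE \<omega> in M. \<omega> \<in> (\<Union>j\<in>{1..n}. {\<omega> \<in> space M. \<forall>i\<in>{1..n} - {j}. X j \<omega> < X i \<omega>})"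
    by (intro AE_prob_1) simp
  then show ?thesis
    by eventually_elim auto
qed

text \<open>Since \<open>\<beta> * ln (X i / \<nu>)\<close> are standard exponential variables, \<open>log_range n\<close> is the range of
  \<open>n\<close> of them.\<close>
definition log_range :: "nat \<Rightarrow> 'a \<Rightarrow> real" where
  "log_range n \<omega> = \<beta> * (ln (sample_max X n \<omega>) - ln (sample_min X n \<omega>))"

lemma log_range_measurable [measurable]: "log_range n \<in> borel_measurable M"
  unfolding log_range_def[abs_def] sample_max_def[abs_def] sample_min_def[abs_def] by measurable

lemma sample_min_eq_strict_min:
  assumes "j \<in> {1..n}" and "\<forall>i\<in>{1..n} - {j}. X j \<omega> < X i \<omega>"
  shows "sample_min X n \<omega> = X j \<omega>"
  unfolding sample_min_def
proof (rule Min_eqI)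
  fix y
  assume "y \<in> (\<lambda>i. X i \<omega>) ` {1..n}"
  then show "X j \<omega> \<le> y"
    using assms(2) by (cases "y = X j \<omega>") (auto intro: less_imp_le)
qed (use assms(1) in auto)

lemma log_range_le_iff:
  assumes j: "j \<in> {1..n}" and min: "\<forall>i\<in>{1..n} - {j}. X j \<omega> < X i \<omega>" and pos: "X j \<omega> > 0"
  shows "log_range n \<omega> \<le> t \<longleftrightarrow> (\<forall>i\<in>{1..n}. X i \<omega> \<le> exp (t / \<beta>) * X j \<omega>)"
proof -
  have finite: "finite ((\<lambda>i. X i \<omega>) ` {1..n})" "(\<lambda>i. X i \<omega>) ` {1..n} \<noteq> {}"
    using j by auto
  have "sample_max X n \<omega> \<ge> X j \<omega>"
    unfolding sample_max_def using finite j by (intro Max_ge) auto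
  then have "sample_max X n \<omega> > 0"
    using pos by linarith
  have "log_range n \<omega> \<le> t \<longleftrightarrow> ln (sample_max X n \<omega>) \<le> ln (X j \<omega>) + t / \<beta>"
    unfolding log_range_def sample_min_eq_strict_min[OF j min] using \<beta>_pos by (simp add: field_simps)
  also have "\<dots> \<longleftrightarrow> sample_max X n \<omega> \<le> exp (ln (X j \<omega>) + t / \<beta>)"
    using \<open>sample_max X n \<omega> > 0\<close> by (metis exp_le_cancel_iff exp_ln)
  also have "exp (ln (X j \<omega>) + t / \<beta>) = exp (t / \<beta>) * X j \<omega>"
    using pos by (simp add: exp_add)
  finally show ?thesis
    unfolding sample_max_def using finite by simp
qed

lemma log_range_nonneg:
  assumes "n \<ge> 1" and pos: "\<forall>i\<in>{1..n}. X i \<omega> > 0"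
  shows "0 \<le> log_range n \<omega>"
proof -
  let ?S = "(\<lambda>i. X i \<omega>) ` {1..n}"
  have S: "finite ?S" "?S \<noteq> {}"
    using assms(1) by auto
  have "sample_min X n \<omega> \<in> ?S"
    unfolding sample_min_def using S by (rule Min_in)
  then have "sample_min X n \<omega> > 0"
    using pos by auto
  moreover have "sample_min X n \<omega> \<le> sample_max X n \<omega>"
    unfolding sample_min_def sample_max_def using S by (meson Max_ge Min_in order_trans Min_le)
  ultimately show ?thesis
    unfolding log_range_def using \<beta>_pos by simp
qed

lemma AE_log_range_le_iff:
  assumes "n \<ge> 2" and "t \<ge> 0"
  shows "AE \<omega> in M. log_range n \<omega> \<le> t \<longleftrightarrow>
           \<omega> \<in> (\<Union>j\<in>{1..n}. {\<omega> \<in> space M. \<forall>i\<in>{1..n} - {j}. X j \<omega> < X i \<omega> \<and> X i \<omega> \<le> exp (t / \<beta>) * X j \<omega>})"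
  using AE_X_gt[of n] AE_unique_min[OF assms(1)] AE_space
proof eventually_elim
  case (elim \<omega>)
  then obtain j where j: "j \<in> {1..n}" and min: "\<forall>i\<in>{1..n} - {j}. X j \<omega> < X i \<omega>"
    by blast
  have "X j \<omega> > 0"
    using elim(1) j \<nu>_pos by force
  moreover have "1 \<le> exp (t / \<beta>)"
    using assms(2) \<beta>_pos by simp
  ultimately have "X j \<omega> \<le> exp (t / \<beta>) * X j \<omega>"
    by simp
  moreover have "k = j"
    if "k \<in> {1..n}" "\<forall>i\<in>{1..n} - {k}. X k \<omega> < X i \<omega> \<and> X i \<omega> \<le> exp (t / \<beta>) * X k \<omega>" for k
    using that j min by (metis DiffI less_asym singletonD)
  ultimately show ?case
    using log_range_le_iff[OF j min \<open>X j \<omega> > 0\<close>] j min elim(3) by blast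
qed

lemma prob_log_range_le_nonneg:
  assumes n: "n \<ge> 2" and "t \<ge> 0"
  shows "prob {\<omega> \<in> space M. log_range n \<omega> \<le> t} = (1 - exp (-t)) ^ (n - 1)"
proof -
  define c where "c = exp (t / \<beta>)"
  have "c \<ge> 1"
    using \<open>t \<ge> 0\<close> \<beta>_pos unfolding c_def by simp
  have "{\<omega> \<in> space M. \<forall>i\<in>{1..n} - {j}. X j \<omega> < X i \<omega> \<and> X i \<omega> \<le> c * X j \<omega>} \<in> events" for j
    by measurable
  then have "prob {\<omega> \<in> space M. log_range n \<omega> \<le> t}
      = prob (\<Union>j\<in>{1..n}. {\<omega> \<in> space M. \<forall>i\<in>{1..n} - {j}. X j \<omega> < X i \<omega> \<and> X i \<omega> \<le> c * X j \<omega>})"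
    using AE_log_range_le_iff[OF n \<open>t \<ge> 0\<close>] unfolding c_def
    by (intro measure_eq_AE) auto
  also have "\<dots> = (1 - c powr (-\<beta>)) ^ (n - 1)"
  proof (rule prob_exists_others_related[OF n])
    have "{p \<in> space (borel \<Otimes>\<^sub>M borel). fst p < snd p \<and> snd p \<le> c * fst p} \<in> sets (borel \<Otimes>\<^sub>M (borel :: real measure))"
      by measurable
    then show "{p :: real \<times> real. fst p < snd p \<and> snd p \<le> c * fst p} \<in> sets (borel \<Otimes>\<^sub>M borel)"
      by (simp add: space_pair_measure)
    show "0 \<le> 1 - c powr (-\<beta>)"
      using powr_mono2'[of "-\<beta>" 1 c] \<open>c \<ge> 1\<close> \<beta>_pos by simp
    fix u :: real
    assume "0 < u" "u \<le> 1"
    then show "measure (pareto_distr \<nu> \<beta>) {x. pareto_quantile \<nu> \<beta> u < x \<and> x \<le> c * pareto_quantile \<nu> \<beta> u}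
        = u * (1 - c powr (-\<beta>))"
      by (simp add: measure_pareto_distr_ratio_interval pareto_quantile_ge pareto_tail_quantile
                    \<nu>_pos \<beta>_pos \<open>c \<ge> 1\<close>)
  qed simp
  also have "c powr (-\<beta>) = exp (-t)"
    unfolding c_def using \<beta>_pos by (simp add: powr_def)
  finally show ?thesis .
qed

lemma prob_log_range_le:
  assumes n: "n \<ge> 2"
  shows "prob {\<omega> \<in> space M. log_range n \<omega> \<le> t} = cdf (max_exp_distr (n - 1)) t"
proof (cases "t < 0")
  case True
  have "AE \<omega> in M. \<omega> \<in> {\<omega> \<in> space M. log_range n \<omega> \<le> t} \<longleftrightarrow> \<omega> \<in> {}"
    using AE_X_gt[of n]
  proof eventually_elim
    case (elim \<omega>)
    then show ?case
      using log_range_nonneg[of n \<omega>] n \<nu>_pos True by force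
  qed
  then have "prob {\<omega> \<in> space M. log_range n \<omega> \<le> t} = prob {}"
    by (rule measure_eq_AE) auto
  then show ?thesis
    using True n by (simp add: cdf_max_exp_distr)
next
  case False
  then show ?thesis
    using n by (simp add: prob_log_range_le_nonneg cdf_max_exp_distr)
qed

lemma distr_log_range:
  assumes "n \<ge> 2"
  shows "distr M borel (log_range n) = max_exp_distr (n - 1)"
proof (rule cdf_unique)
  show "real_distribution (max_exp_distr (n - 1))"
    using assms by (intro real_distribution_max_exp_distr) simp
  show "cdf (distr M borel (log_range n)) = cdf (max_exp_distr (n - 1))"
  proof
    fix t
    have "cdf (distr M borel (log_range n)) t = prob {\<omega> \<in> space M. log_range n \<omega> \<le> t}"
      unfolding cdf_def by (subst measure_distr) (auto simp: vimage_def Collect_conj_eq Int_commute)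
    then show "cdf (distr M borel (log_range n)) t = cdf (max_exp_distr (n - 1)) t"
      using prob_log_range_le[OF assms] by simp
  qed
qed simp

lemma weak_conv_log_range_gumbel:
  "weak_conv (\<lambda>n. cdf (distr M borel (\<lambda>\<omega>. log_range n \<omega> - ln (real n)))) (gumbel_cdf 0 1)"
  unfolding weak_conv_def
proof (intro allI impI)
  fix x
  have shift: "cdf (max_exp_distr (n - 1)) (x + ln (real n)) = cdf (distr M borel (\<lambda>\<omega>. log_range n \<omega> - ln (real n))) x"
    if "n \<ge> 2" for n
  proof -
    have "cdf (distr M borel (\<lambda>\<omega>. log_range n \<omega> - ln (real n))) x
        = prob {\<omega> \<in> space M. log_range n \<omega> \<le> x + ln (real n)}"
      unfolding cdf_def by (subst measure_distr) (auto simp: vimage_def Collect_conj_eq Int_commute diff_le_eq)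
    then show ?thesis
      using prob_log_range_le[OF that] by simp
  qed
  have "eventually (\<lambda>n. cdf (max_exp_distr (n - 1)) (x + ln (real n))
      = cdf (distr M borel (\<lambda>\<omega>. log_range n \<omega> - ln (real n))) x) sequentially"
    using eventually_ge_at_top[of "2::nat"] by eventually_elim (rule shift)
  with LIMSEQ_cdf_max_exp_distr_gumbel
  show "(\<lambda>n. cdf (distr M borel (\<lambda>\<omega>. log_range n \<omega> - ln (real n))) x) \<longlonglongrightarrow> gumbel_cdf 0 1 x"
    by (rule Lim_transform_eventually)
qed

lemma mean_var_skew_affine_log_range:
  assumes "n \<ge> 2" and "c > 0"
  shows "mean M (\<lambda>\<omega>. 1 + log_range n \<omega> / c) = 1 + harm (n - 1) / c"
    and "var M (\<lambda>\<omega>. 1 + log_range n \<omega> / c) = gen_harm 2 (n - 1) / c ^ 2"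
    and "skew M (\<lambda>\<omega>. 1 + log_range n \<omega> / c) = 2 * gen_harm 3 (n - 1) / gen_harm 2 (n - 1) powr (3 / 2)"
proof -
  have "n - 1 > 0"
    using assms by simp
  note moments = mean_var_skew_max_exp[OF prob_space_axioms log_range_measurable
                   distr_log_range[OF assms(1)] this]
  note affine = mean_var_skew_affine[OF prob_space_axioms moments(1) \<open>c > 0\<close>]
  show "mean M (\<lambda>\<omega>. 1 + log_range n \<omega> / c) = 1 + harm (n - 1) / c"
    using affine(1) moments(2) by simp
  show "var M (\<lambda>\<omega>. 1 + log_range n \<omega> / c) = gen_harm 2 (n - 1) / c ^ 2"
    using affine(2) moments(3) by simp
  show "skew M (\<lambda>\<omega>. 1 + log_range n \<omega> / c) = 2 * gen_harm 3 (n - 1) / gen_harm 2 (n - 1) powr (3 / 2)"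
    using affine(3) moments(4) by simp
qed

lemma asymp_equiv_mean_var_skew_affine_log_range:
  assumes "c > 0"
  shows "(\<lambda>n. mean M (\<lambda>\<omega>. 1 + log_range n \<omega> / c)) \<sim>[at_top] (\<lambda>n. ln (real n) / c)"
    and "(\<lambda>n. var M (\<lambda>\<omega>. 1 + log_range n \<omega> / c)) \<sim>[at_top] (\<lambda>_. pi\<^sup>2 / 6 / c ^ 2)"
    and "(\<lambda>n. skew M (\<lambda>\<omega>. 1 + log_range n \<omega> / c)) \<sim>[at_top] (\<lambda>_. 12 * sqrt 6 * zeta3 / pi ^ 3)"
proof -
  have large: "\<forall>\<^sub>F n in at_top. n \<ge> (2 :: nat)"
    by simp
  note moments = mean_var_skew_affine_log_range[OF _ assms]
  note shift = filterlim_compose[OF _ filterlim_minus_const_nat_at_top[of 1]]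
  show "(\<lambda>n. mean M (\<lambda>\<omega>. 1 + log_range n \<omega> / c)) \<sim>[at_top] (\<lambda>n. ln (real n) / c)"
  proof (rule asymp_equiv_transfer)
    show "(\<lambda>n. 1 + harm (n - 1) / c) \<sim>[at_top] (\<lambda>n. ln (real n) / c)"
      using asymp_equiv_divide[OF asymp_equiv_harm_pred_ln[of c] asymp_equiv_refl[of "\<lambda>_. c"]] assms
      by (simp add: add_divide_distrib)
    show "\<forall>\<^sub>F n in at_top. 1 + harm (n - 1) / c = mean M (\<lambda>\<omega>. 1 + log_range n \<omega> / c)"
      using large by eventually_elim (simp add: moments)
  qed simp
  show "(\<lambda>n. var M (\<lambda>\<omega>. 1 + log_range n \<omega> / c)) \<sim>[at_top] (\<lambda>_. pi\<^sup>2 / 6 / c ^ 2)"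
  proof (rule asymp_equiv_transfer)
    show "(\<lambda>n. gen_harm 2 (n - 1) / c ^ 2) \<sim>[at_top] (\<lambda>_. pi\<^sup>2 / 6 / c ^ 2)"
      using assms by (intro tendsto_imp_asymp_equiv_const tendsto_divide shift[OF LIMSEQ_gen_harm_2]) auto
    show "\<forall>\<^sub>F n in at_top. gen_harm 2 (n - 1) / c ^ 2 = var M (\<lambda>\<omega>. 1 + log_range n \<omega> / c)"
      using large by eventually_elim (simp add: moments)
  qed simp
  show "(\<lambda>n. skew M (\<lambda>\<omega>. 1 + log_range n \<omega> / c)) \<sim>[at_top] (\<lambda>_. 12 * sqrt 6 * zeta3 / pi ^ 3)"
  proof (rule asymp_equiv_transfer)
    show "(\<lambda>n. 2 * gen_harm 3 (n - 1) / gen_harm 2 (n - 1) powr (3 / 2))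
        \<sim>[at_top] (\<lambda>_. 12 * sqrt 6 * zeta3 / pi ^ 3)"
      using zeta3_pos by (intro tendsto_imp_asymp_equiv_const shift[OF LIMSEQ_max_exp_skewness]) auto
    show "\<forall>\<^sub>F n in at_top. 2 * gen_harm 3 (n - 1) / gen_harm 2 (n - 1) powr (3 / 2)
        = skew M (\<lambda>\<omega>. 1 + log_range n \<omega> / c)"
      using large by eventually_elim (simp add: moments)
  qed simp
qed

end

theorem proposition3:
  fixes M :: "'a measure" and X :: "nat \<Rightarrow> 'a \<Rightarrow> real"
    and \<nu> \<beta> \<rho> :: real and Mn :: "nat \<Rightarrow> 'a \<Rightarrow> real"
  assumes "prob_space M"
    and "\<nu> > 0" and "\<beta> > 0" and "\<rho> > 1"
    and "\<And>i. X i \<in> borel_measurable M"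
    and "prob_space.indep_vars M (\<lambda>_. borel) X UNIV"
    and "\<And>i. cdf (distr M borel (X i)) = pareto_cdf \<nu> \<beta>"
    and "\<And>n \<omega>. Mn n \<omega> =
           (ln (sample_max X n \<omega>) - ln (sample_min X n \<omega>)) / ln \<rho> + 1"
  shows "weak_conv
           (\<lambda>n. cdf (distr M borel (\<lambda>\<omega>. (Mn n \<omega> - 1) * (\<beta> * ln \<rho>) - ln (real n))))
           (gumbel_cdf 0 1)
       \<and> (\<lambda>n. mean M (Mn n)) \<sim>[at_top] (\<lambda>n. ln (real n) / (\<beta> * ln \<rho>))
       \<and> (\<lambda>n. var M (Mn n)) \<sim>[at_top] (\<lambda>n. pi^2 / (6 * \<beta>^2 * (ln \<rho>)^2))
       \<and> (\<lambda>n. skew M (Mn n)) \<sim>[at_top] (\<lambda>n. 12 * sqrt 6 * zeta3 / pi^3)"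
proof -
  interpret iid_pareto M X \<nu> \<beta>
    using assms(1-3,5-7) by (intro iid_pareto.intro iid_pareto_axioms.intro) auto
  define c where "c = \<beta> * ln \<rho>"
  have "c > 0"
    unfolding c_def using assms(3,4) by simp
  have Mn: "Mn n = (\<lambda>\<omega>. 1 + log_range n \<omega> / c)" for n
    using assms(3,4) unfolding c_def log_range_def by (intro ext) (simp add: assms(8) field_simps)
  have shifted: "(\<lambda>\<omega>. (Mn n \<omega> - 1) * (\<beta> * ln \<rho>) - ln (real n)) = (\<lambda>\<omega>. log_range n \<omega> - ln (real n))"
    for n
    using \<open>c > 0\<close> by (simp add: Mn c_def[symmetric])
  have variance_limit: "pi ^ 2 / (6 * \<beta> ^ 2 * (ln \<rho>) ^ 2) = pi\<^sup>2 / 6 / c ^ 2"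
    unfolding c_def by (simp add: power_mult_distrib)
  show ?thesis
    unfolding shifted unfolding Mn c_def[symmetric] variance_limit
    using weak_conv_log_range_gumbel asymp_equiv_mean_var_skew_affine_log_range[OF \<open>c > 0\<close>] by blast
qed

end
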